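(* Let $G=PL_\delta(\mathbb{R}_{+})$ and $H=\{f\in G : \lim_{x\to\infty} f(x)/x = 1\}$. Then the quotient group $G/H$ is torsion-free: if $g\in G$ and $g^r\in H$ for some positive integer $r$, then $g\in H$.
   Context: A homeomorphism $f$ of $[0,\infty)$ is piecewise linear if its set $B(f)$ of breakpoints (points where $f$ is not differentiable) is discrete and $f$ is affine on each complementary interval. Its set of slopes is $\Lambda(f)=\{f'(t): t\notin B(f)\}$; $\Lambda(f)$ is bounded if there is $K>1$ with $K^{-1}<|\lambda|<K$ for all $\lambda\in\Lambda(f)$. $PL_\delta(\mathbb{R}_{+})$ denotes the group (under composition) of piecewise-linear homeomorphisms of $[0,\infty)$ with bounded set of slopes. $H$ is a normal subgroup of $G$. *)

theory Defs
  imports "HOL-Analysis.Analysis"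
begin

text \<open>Homeomorphisms of the half-line [0,\<infinity>), represented as functions real \<Rightarrow> real
  (values outside {0..} are irrelevant).\<close>
definition halfline_homeo :: "(real \<Rightarrow> real) \<Rightarrow> bool" where
  "halfline_homeo f \<longleftrightarrow> (\<exists>g. homeomorphism {0..} {0..} f g)"

definition breakpoints :: "(real \<Rightarrow> real) \<Rightarrow> real set" where
  "breakpoints f = {t. 0 \<le> t \<and> \<not> (f differentiable (at t within {0..}))}"

definition slopes :: "(real \<Rightarrow> real) \<Rightarrow> real set" where
  "slopes f = {m. \<exists>t. 0 \<le> t \<and> t \<notin> breakpoints f \<and>
                       (f has_real_derivative m) (at t within {0..})}"

text \<open>Piecewise linear: discrete (closed, i.e. locally finite) set of breakpoints and f
  affine on each interval avoiding the breakpoints.\<close>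
definition piecewise_linear :: "(real \<Rightarrow> real) \<Rightarrow> bool" where
  "piecewise_linear f \<longleftrightarrow>
     (\<forall>b. finite (breakpoints f \<inter> {0..b})) \<and>
     (\<forall>a b. 0 \<le> a \<and> a < b \<and> {a<..<b} \<inter> breakpoints f = {} \<longrightarrow>
        (\<exists>m c. \<forall>x\<in>{a..b}. f x = m * x + c))"

definition bounded_slopes :: "(real \<Rightarrow> real) \<Rightarrow> bool" where
  "bounded_slopes f \<longleftrightarrow> (\<exists>K>1. \<forall>s\<in>slopes f. inverse K < \<bar>s\<bar> \<and> \<bar>s\<bar> < K)"

definition PL_delta :: "(real \<Rightarrow> real) set" where
  "PL_delta = {f. halfline_homeo f \<and> piecewise_linear f \<and> bounded_slopes f}"

definition H_asym :: "(real \<Rightarrow> real) set" where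
  "H_asym = {f \<in> PL_delta. ((\<lambda>x. f x / x) \<longlongrightarrow> 1) at_top}"

end

theory Submission
  imports Defs
begin

text \<open>Elements of PL_delta are increasing, so for x > 0 the value g x lies between x and
  g^r x: if x \<le> g x then x \<le> g^k x for all k, whence g x \<le> g(g^(r-1) x) = g^r x, and
  symmetrically if g x \<le> x. Dividing by x, g x / x is squeezed between 1 and
  g^r x / x, which tends to 1.\<close>

lemma homeomorphism_halfline_strict_mono:
  fixes f :: "real \<Rightarrow> real"
  assumes hom: "homeomorphism {0..} {0..} f f'"
  shows "strict_mono_on {0..} f"
proof -
  have cont: "continuous_on {0..} f" and onto: "f ` {0..} = {0..}"
    using hom unfolding homeomorphism_def by auto
  have "inj_on f {0..}"
    using hom by (metis homeomorphism_apply1 inj_on_inverseI)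
  then have "strict_mono_on {0..} f \<or> strict_antimono_on {0..} f"
    using injective_eq_monotone_map[of "{0..}" f] cont by simp
  moreover have "\<not> strict_antimono_on {0..} f"
  proof
    assume anti: "strict_antimono_on {0..} f"
    have "0 \<le> f 0"
      using onto by auto
    then have "f 0 + 1 \<in> f ` {0..}"
      using onto by simp
    then obtain x where "0 \<le> x" "f x = f 0 + 1"
      by auto
    moreover have "f x \<le> f 0" if "0 \<le> x" for x
      using monotone_onD[OF anti, of 0 x] that by (cases "x = 0") auto
    ultimately show False
      by fastforce
  qed
  ultimately show ?thesis
    by blast
qed

lemma PL_delta_mono_on:
  assumes "g \<in> PL_delta"
  shows "mono_on {0..} g" and "g ` {0..} \<subseteq> {0..}"
  using assms homeomorphism_halfline_strict_mono strict_mono_on_imp_mono_on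
  unfolding PL_delta_def halfline_homeo_def homeomorphism_def by blast+

lemma funpow_in_self_map:
  assumes "f ` S \<subseteq> S" "x \<in> S"
  shows "(f ^^ n) x \<in> S"
  using assms by (induction n) auto

lemma funpow_ge_self_mono_on:
  fixes f :: "'a::order \<Rightarrow> 'a"
  assumes mono: "mono_on S f" and self: "f ` S \<subseteq> S" and x: "x \<in> S" "x \<le> f x"
  shows "x \<le> (f ^^ n) x"
proof (induction n)
  case (Suc n)
  have "f x \<le> f ((f ^^ n) x)"
    using mono_onD[OF mono] Suc funpow_in_self_map[OF self x(1)] x(1) by blast
  then show ?case
    using x(2) by simp
qed simp

lemma funpow_le_self_mono_on:
  fixes f :: "'a::order \<Rightarrow> 'a"
  assumes mono: "mono_on S f" and self: "f ` S \<subseteq> S" and x: "x \<in> S" "f x \<le> x"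
  shows "(f ^^ n) x \<le> x"
proof (induction n)
  case (Suc n)
  have "f ((f ^^ n) x) \<le> f x"
    using mono_onD[OF mono] Suc funpow_in_self_map[OF self x(1)] x(1) by blast
  then show ?case
    using x(2) by simp
qed simp

lemma mono_on_between_funpow:
  fixes f :: "'a::linorder \<Rightarrow> 'a"
  assumes mono: "mono_on S f" and self: "f ` S \<subseteq> S" and x: "x \<in> S" and "0 < r"
  shows "min x ((f ^^ r) x) \<le> f x \<and> f x \<le> max x ((f ^^ r) x)"
proof -
  obtain k where r: "r = Suc k"
    using \<open>0 < r\<close> gr0_implies_Suc by blast
  have fkx: "(f ^^ k) x \<in> S"
    using funpow_in_self_map[OF self x] .
  show ?thesis
  proof (cases "x \<le> f x")
    case True
    then have "f x \<le> f ((f ^^ k) x)"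
      using mono_onD[OF mono] funpow_ge_self_mono_on[OF mono self x] fkx x by blast
    then show ?thesis
      using True r by simp
  next
    case False
    then have "f ((f ^^ k) x) \<le> f x"
      using mono_onD[OF mono] funpow_le_self_mono_on[OF mono self x] fkx x by fastforce
    then show ?thesis
      using False r by simp
  qed
qed

lemma tendsto_between_const:
  fixes f g :: "'a \<Rightarrow> 'b::linorder_topology"
  assumes lim: "(f \<longlongrightarrow> l) F"
    and between: "\<forall>\<^sub>F x in F. min l (f x) \<le> g x \<and> g x \<le> max l (f x)"
  shows "(g \<longlongrightarrow> l) F"
proof (rule tendsto_sandwich)
  show "((\<lambda>x. min l (f x)) \<longlongrightarrow> l) F"
    using tendsto_min[OF tendsto_const[of l] lim] by simp
  show "((\<lambda>x. max l (f x)) \<longlongrightarrow> l) F"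
    using tendsto_max[OF tendsto_const[of l] lim] by simp
qed (use between in \<open>auto elim: eventually_mono\<close>)

theorem theorem2:
  fixes g :: "real \<Rightarrow> real" and r :: nat
  assumes "g \<in> PL_delta" and "0 < r" and "(g ^^ r) \<in> H_asym"
  shows "g \<in> H_asym"
proof -
  have "((\<lambda>x. (g ^^ r) x / x) \<longlongrightarrow> 1) at_top"
    using assms(3) unfolding H_asym_def by simp
  moreover have "\<forall>\<^sub>F x in at_top.
      min 1 ((g ^^ r) x / x) \<le> g x / x \<and> g x / x \<le> max 1 ((g ^^ r) x / x)"
    using eventually_gt_at_top[of "0::real"]
  proof eventually_elim
    case (elim x)
    then have "min x ((g ^^ r) x) \<le> g x \<and> g x \<le> max x ((g ^^ r) x)"
      using mono_on_between_funpow[OF PL_delta_mono_on[OF assms(1)]] assms(2) by simp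
    then show ?case
      using elim by (auto simp: min_def max_def field_simps)
  qed
  ultimately have "((\<lambda>x. g x / x) \<longlongrightarrow> 1) at_top"
    by (rule tendsto_between_const)
  then show ?thesis
    using assms(1) unfolding H_asym_def by simp
qed

end
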